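(* Fix a constant $0<\alpha<1$. For integers $1\le D\le \alpha n$, the number of pairwise non-isomorphic graphs in the class $\mathcal{L}(n,D)$ of lollipops is at least $$\frac{\big((\lceil n(1-\alpha)\rceil-1)!\big)^{\lceil n(1-\alpha)\rceil}}{\lceil n(1-\alpha)\rceil!}.$$
   Context: Port-labeled graphs: finite simple undirected connected graphs without node labels, where at each node of degree $d$ the incident edges carry distinct port numbers $0,\dots,d-1$; isomorphism is a bijection of nodes preserving edges and port numbers at both endpoints. A lollipop in $\mathcal{L}(n,D)$ has $n$ nodes partitioned into the candy $\{w_1,\dots,w_{n-D}\}$ and the stick $\{s_1,\dots,s_D\}$. The candy nodes form a clique whose edges receive port numbers from $\{0,\dots,n-D-2\}$ at each candy node in an arbitrary way (each candy node using each of these ports exactly once). The stick is the path $s_1,\dots,s_D$ where edge $\{s_j,s_{j+1}\}$ has port $0$ at $s_j$ and port $1$ at $s_{j+1}$; write $u=s_1$ and $v=s_D$ ($u=v$ if $D=1$). Node $v$ is joined to every candy node $w_i$; at each $w_i$ this edge has port $n-D-1$; at $v$ it has port $0$ if $i=1$, and for $i>1$ port $i$ if $u\ne v$ and port $i-1$ if $u=v$. The class $\mathcal{L}(n,D)$ consists of all lollipops obtained by all choices of the port numbering inside the candy. *)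

theory Defs
  imports Complex_Main
begin

text \<open>A port-labeled graph on the node set {0..<n} is represented by a pair (E, p):
  E x y holds iff {x,y} is an edge, and p x y is the port number at node x of the
  edge {x,y}.  (Values outside edges / outside the node set are irrelevant.)\<close>

type_synonym pgraph = "(nat \<Rightarrow> nat \<Rightarrow> bool) \<times> (nat \<Rightarrow> nat \<Rightarrow> nat)"

definition port_iso :: "nat \<Rightarrow> pgraph \<Rightarrow> pgraph \<Rightarrow> bool" where
  "port_iso n G H \<longleftrightarrow> (\<exists>f. bij_betw f {0..<n} {0..<n} \<and>
     (\<forall>x<n. \<forall>y<n. (fst G x y \<longleftrightarrow> fst H (f x) (f y)) \<and>
        (fst G x y \<longrightarrow> snd G x y = snd H (f x) (f y))))"

text \<open>Lollipop layout with k = n - D candy nodes: candy node w_(i+1) is node i (i < k);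
  stick node s_(t+1) is node k + t (t < D); so u = k and v = n - 1.\<close>
definition lol_edge :: "nat \<Rightarrow> nat \<Rightarrow> nat \<Rightarrow> nat \<Rightarrow> bool" where
  "lol_edge n D x y \<longleftrightarrow>
     (let k = n - D in
       (x < k \<and> y < k \<and> x \<noteq> y)
     \<or> (k \<le> x \<and> x < n \<and> k \<le> y \<and> y < n \<and> (y = x + 1 \<or> x = y + 1))
     \<or> (x = n - 1 \<and> y < k) \<or> (y = n - 1 \<and> x < k))"

definition lol_port :: "nat \<Rightarrow> nat \<Rightarrow> (nat \<Rightarrow> nat \<Rightarrow> nat) \<Rightarrow> nat \<Rightarrow> nat \<Rightarrow> nat" where
  "lol_port n D P x y =
     (let k = n - D in
      if \<not> lol_edge n D x y then 0
      else if x < k \<and> y < k then P x y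
      else if x < k then k - 1
      else if x = n - 1 \<and> y < k then
        (if y = 0 then 0 else if D \<noteq> 1 then y + 1 else y)
      else if y = x + 1 then 0 else 1)"

definition valid_candy_ports :: "nat \<Rightarrow> (nat \<Rightarrow> nat \<Rightarrow> nat) \<Rightarrow> bool" where
  "valid_candy_ports k P \<longleftrightarrow> (\<forall>i<k. bij_betw (P i) ({0..<k} - {i}) {0..<k - 1})"

definition lollipops :: "nat \<Rightarrow> nat \<Rightarrow> pgraph set" where
  "lollipops n D = {(lol_edge n D, lol_port n D P) | P. valid_candy_ports (n - D) P}"

end

theory Submission
  imports Defs "HOL-Combinatorics.Permutations"
begin

text \<open>Any isomorphism between two lollipops of the class fixes the node v (for k = n - D \<ge> 3 it
  is the only node reached by port k - 1 from two different candy nodes) and then, because the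
  ports at v name the candy nodes individually, every candy node.  So isomorphic members of the
  class have the same port numbering inside the candy, and it remains to count numberings:
  choosing at each of the k candy nodes an arbitrary permutation of the ports 0..k-2 gives
  ((k-1)!)^k of them, which dominates the claimed bound since \<lceil>n(1-\<alpha>)\<rceil> \<le> k.\<close>

definition candy_offset :: "nat \<Rightarrow> nat \<Rightarrow> nat \<Rightarrow> nat" where
  "candy_offset k i j = (if i < j then j - i - 1 else j + k - i - 1)"

definition candy_offset_inv :: "nat \<Rightarrow> nat \<Rightarrow> nat \<Rightarrow> nat" where
  "candy_offset_inv k i p = (if p < k - 1 - i then p + i + 1 else p + i + 1 - k)"

lemma bij_betw_candy_offset:
  "i < k \<Longrightarrow> bij_betw (candy_offset k i) ({0..<k} - {i}) {0..<k - 1}"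
  by (rule bij_betw_byWitness[where f' = "candy_offset_inv k i"])
     (auto simp: candy_offset_def candy_offset_inv_def)

lemma candy_offset_inv:
  "i < k \<Longrightarrow> p < k - 1 \<Longrightarrow>
     candy_offset_inv k i p < k \<and> candy_offset_inv k i p \<noteq> i \<and>
     candy_offset k i (candy_offset_inv k i p) = p"
  by (auto simp: candy_offset_def candy_offset_inv_def)

text \<open>The port numbering inside the candy in which node i lists its neighbours i+1, i+2, ...
  (cyclically) and then relabels the ports by the permutation s i.\<close>
definition candy_numbering :: "nat \<Rightarrow> (nat \<Rightarrow> nat \<Rightarrow> nat) \<Rightarrow> nat \<Rightarrow> nat \<Rightarrow> nat" where
  "candy_numbering k s i j = s i (candy_offset k i j)"

abbreviation port_permutations :: "nat \<Rightarrow> (nat \<Rightarrow> nat \<Rightarrow> nat) set" where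
  "port_permutations k \<equiv> \<Pi>\<^sub>E i\<in>{0..<k}. {p. p permutes {0..<k - 1}}"

lemma card_port_permutations: "card (port_permutations k) = fact (k - 1) ^ k"
  by (simp add: card_PiE card_permutations)

lemma finite_port_permutations: "finite (port_permutations k)"
  by (intro finite_PiE) (auto intro: finite_permutations)

lemma valid_candy_ports_candy_numbering:
  assumes "s \<in> port_permutations k"
  shows "valid_candy_ports k (candy_numbering k s)"
  unfolding valid_candy_ports_def
proof (intro allI impI)
  fix i assume i: "i < k"
  then have "bij_betw (s i) {0..<k - 1} {0..<k - 1}"
    using assms by (auto intro: permutes_imp_bij)
  with bij_betw_candy_offset[OF i]
  have "bij_betw (s i \<circ> candy_offset k i) ({0..<k} - {i}) {0..<k - 1}"
    by (rule bij_betw_trans)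
  then show "bij_betw (candy_numbering k s i) ({0..<k} - {i}) {0..<k - 1}"
    by (simp add: candy_numbering_def[abs_def] comp_def)
qed

lemma candy_numbering_eqD:
  assumes s: "s \<in> port_permutations k" and t: "t \<in> port_permutations k"
    and eq: "\<And>i j. i < k \<Longrightarrow> j < k \<Longrightarrow> i \<noteq> j \<Longrightarrow>
                 candy_numbering k s i j = candy_numbering k t i j"
  shows "s = t"
proof
  fix i show "s i = t i"
  proof (cases "i < k")
    case False
    then show ?thesis using s t by (auto simp: PiE_def extensional_def)
  next
    case i: True
    have ps: "s i permutes {0..<k - 1}" and pt: "t i permutes {0..<k - 1}"
      using s t i by auto
    show ?thesis
    proof
      fix p show "s i p = t i p"
      proof (cases "p < k - 1")
        case False
        then show ?thesis using ps pt by (simp add: permutes_not_in)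
      next
        case True
        then show ?thesis
          using eq[of i "candy_offset_inv k i p"] candy_offset_inv[OF i True] i
          by (simp add: candy_numbering_def)
      qed
    qed
  qed
qed

lemma lol_port_candy:
  "i < n - D \<Longrightarrow> j < n - D \<Longrightarrow> i \<noteq> j \<Longrightarrow> lol_edge n D i j \<and> lol_port n D P i j = P i j"
  by (simp add: lol_port_def lol_edge_def)

lemma lol_port_eq_iff:
  assumes "1 \<le> D"
  shows "lol_port n D P = lol_port n D Q \<longleftrightarrow>
           (\<forall>i<n - D. \<forall>j<n - D. i \<noteq> j \<longrightarrow> P i j = Q i j)"
  using assms by (auto simp: fun_eq_iff lol_port_def lol_edge_def Let_def)

text \<open>Port k - 1 is used only on the edges joining the candy to v = n - 1: inside the candy the
  ports are at most k - 2, and on the stick they are 0 or 1 < k - 1.\<close>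
lemma lol_port_top_imp_v:
  assumes k3: "3 \<le> n - D" and D: "1 \<le> D" and Q: "valid_candy_ports (n - D) Q"
    and e: "lol_edge n D y w" and p: "lol_port n D Q y w = n - D - 1"
  shows "y = n - 1 \<or> w = n - 1"
proof (rule ccontr)
  assume nv: "\<not> (y = n - 1 \<or> w = n - 1)"
  consider "y < n - D" "w < n - D" | "y < n - D" "\<not> w < n - D" | "\<not> y < n - D"
    by blast
  then show False
  proof cases
    case 1
    have "y \<noteq> w" using 1 e D by (auto simp: lol_edge_def)
    moreover have "bij_betw (Q y) ({0..<n - D} - {y}) {0..<n - D - 1}"
      using 1 Q unfolding valid_candy_ports_def by blast
    ultimately have "Q y w < n - D - 1" using 1 by (auto dest: bij_betwE)
    then show False using p lol_port_candy[OF 1 \<open>y \<noteq> w\<close>, of Q] by simp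
  next
    case 2
    then show False using e nv by (auto simp: lol_edge_def)
  next
    case 3
    then have "lol_port n D Q y w = (if w = y + 1 then 0 else 1)"
      using nv e unfolding lol_port_def Let_def by auto
    then show False using p k3 by (simp split: if_splits)
  qed
qed

lemma lol_port_v_inj:
  assumes "1 \<le> D" "D < n" "y < n - D" "z < n" "lol_edge n D (n - 1) z"
    and "lol_port n D Q (n - 1) z = lol_port n D P (n - 1) y"
  shows "z = y"
  using assms by (auto simp: lol_port_def lol_edge_def Let_def split: if_splits)

lemma port_iso_lollipops_imp_eq:
  assumes k3: "3 \<le> n - D" and D: "1 \<le> D"
    and P: "valid_candy_ports (n - D) P" and Q: "valid_candy_ports (n - D) Q"
    and iso: "port_iso n (lol_edge n D, lol_port n D P) (lol_edge n D, lol_port n D Q)"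
  shows "lol_port n D P = lol_port n D Q"
proof -
  define k where "k = n - D"
  define v where "v = n - 1"
  obtain f where bij: "bij_betw f {0..<n} {0..<n}" and
    fp: "\<And>x y. x < n \<Longrightarrow> y < n \<Longrightarrow> (lol_edge n D x y \<longleftrightarrow> lol_edge n D (f x) (f y)) \<and>
        (lol_edge n D x y \<longrightarrow> lol_port n D P x y = lol_port n D Q (f x) (f y))"
    using iso unfolding port_iso_def by auto
  have f_less: "f x < n" if "x < n" for x
    using bij that by (auto dest: bij_betwE)
  have v: "v < n" "k \<le> v" "k < n" using k3 D unfolding v_def k_def by auto
  have fv: "f v = v"
  proof -
    have "f y = v \<or> f v = v" if y: "y < k" for y
    proof -
      have "lol_edge n D y v \<and> lol_port n D P y v = k - 1"
        using y v D unfolding k_def v_def by (auto simp: lol_edge_def lol_port_def Let_def)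
      then have "lol_edge n D (f y) (f v) \<and> lol_port n D Q (f y) (f v) = k - 1"
        using fp[of y v] y v by auto
      then show ?thesis
        using lol_port_top_imp_v[OF k3 D Q] unfolding k_def v_def by blast
    qed
    moreover have "f 0 \<noteq> f 1"
    proof -
      have "1 < n" using k3 by linarith
      then show ?thesis using bij unfolding bij_betw_def inj_on_def by fastforce
    qed
    moreover have "0 < k" "1 < k" using k3 unfolding k_def by linarith+
    ultimately show ?thesis by metis
  qed
  have f_candy: "f y = y" if y: "y < k" for y
  proof -
    have e: "lol_edge n D v y" using y v unfolding v_def k_def by (auto simp: lol_edge_def)
    then have "lol_edge n D v (f y) \<and> lol_port n D Q v (f y) = lol_port n D P v y"
      using fp[of v y] fv y v by auto
    then show ?thesis
      using lol_port_v_inj[OF D _ _ f_less] y v unfolding k_def v_def by auto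
  qed
  show ?thesis
    unfolding lol_port_eq_iff[OF D]
  proof (intro allI impI)
    fix i j assume ij: "i < n - D" "j < n - D" "i \<noteq> j"
    then have "i < n" "j < n" by auto
    with fp[of i j] f_candy ij show "P i j = Q i j"
      using lol_port_candy[OF ij, of P] lol_port_candy[OF ij, of Q] unfolding k_def by simp
  qed
qed

lemma noniso_lollipops_card:
  assumes D: "1 \<le> D" "D < n"
  shows "\<exists>S \<subseteq> lollipops n D. finite S \<and>
           (\<forall>G\<in>S. \<forall>H\<in>S. G \<noteq> H \<longrightarrow> \<not> port_iso n G H) \<and>
           card S = fact (n - D - 1) ^ (n - D)"
proof -
  define k where "k = n - D"
  define F where "F s = (lol_edge n D, lol_port n D (candy_numbering k s))" for s
  define S where "S = F ` port_permutations k"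
  have inj: "inj_on F (port_permutations k)"
  proof (rule inj_onI)
    fix s t
    assume s: "s \<in> port_permutations k" and t: "t \<in> port_permutations k" and "F s = F t"
    then have "\<forall>i<k. \<forall>j<k. i \<noteq> j \<longrightarrow> candy_numbering k s i j = candy_numbering k t i j"
      using lol_port_eq_iff[OF D(1)] unfolding F_def k_def by simp
    then show "s = t" using candy_numbering_eqD[OF s t] by blast
  qed
  have card: "card S = fact (k - 1) ^ k"
    unfolding S_def card_image[OF inj] by (rule card_port_permutations)
  have "S \<subseteq> lollipops n D"
    unfolding S_def F_def lollipops_def k_def
    using valid_candy_ports_candy_numbering by blast
  moreover have "\<not> port_iso n G H" if G: "G \<in> S" and H: "H \<in> S" and "G \<noteq> H" for G H
  proof (cases "3 \<le> k")
    case True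
    obtain s t where s: "s \<in> port_permutations k" "G = F s"
      and t: "t \<in> port_permutations k" "H = F t"
      using G H unfolding S_def by blast
    show ?thesis
    proof
      assume "port_iso n G H"
      then have "lol_port n D (candy_numbering k s) = lol_port n D (candy_numbering k t)"
        using port_iso_lollipops_imp_eq[OF _ D(1)] valid_candy_ports_candy_numbering[OF s(1)]
          valid_candy_ports_candy_numbering[OF t(1)] True s(2) t(2)
        unfolding F_def k_def by blast
      then show False using \<open>G \<noteq> H\<close> s(2) t(2) unfolding F_def by simp
    qed
  next
    case False
    then have "k - 1 = 0 \<or> k - 1 = 1" by linarith
    then have "fact (k - 1) = (1::nat)" by auto
    then have "card S = 1" using card by simp
    then show ?thesis using G H \<open>G \<noteq> H\<close> by (auto simp: card_Suc_eq)
  qed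
  moreover have "finite S" unfolding S_def using finite_port_permutations by blast
  ultimately show ?thesis using card unfolding k_def by blast
qed

lemma fact_power_div_fact_le:
  assumes "m \<le> k"
  shows "real (fact (m - 1) ^ m) / real (fact m) \<le> real (fact (k - 1) ^ k)"
proof -
  have "fact (m - 1) ^ m \<le> (fact (k - 1) :: nat) ^ m"
    using assms by (intro power_mono fact_mono) auto
  also have "\<dots> \<le> fact (k - 1) ^ k"
    using assms by (intro power_increasing fact_ge_1)
  finally have "real (fact (m - 1) ^ m) \<le> real (fact (k - 1) ^ k)"
    by (simp only: of_nat_le_iff)
  moreover have "real (fact (m - 1) ^ m) / real (fact m) \<le> real (fact (m - 1) ^ m)"
    using divide_left_mono[of 1 "real (fact m)" "real (fact (m - 1) ^ m)"] by simp
  ultimately show ?thesis by linarith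
qed

theorem corollary5p3:
  fixes \<alpha> :: real and n D :: nat
  assumes "0 < \<alpha>" and "\<alpha> < 1"
    and "1 \<le> D" and "real D \<le> \<alpha> * real n"
  shows "\<exists>S \<subseteq> lollipops n D. finite S \<and>
           (\<forall>G\<in>S. \<forall>H\<in>S. G \<noteq> H \<longrightarrow> \<not> port_iso n G H) \<and>
           real (card S) \<ge>
             (let m = nat \<lceil>real n * (1 - \<alpha>)\<rceil> in real (fact (m - 1) ^ m) / real (fact m))"
proof -
  define k where "k = n - D"
  define m where "m = nat \<lceil>real n * (1 - \<alpha>)\<rceil>"
  have "0 < real n" using assms by (cases "n = 0") auto
  then have "\<alpha> * real n < real n" using assms(2) by simp
  then have "D < n" using assms(4) by linarith
  then have "real n * (1 - \<alpha>) \<le> real k" using assms(4) by (simp add: k_def algebra_simps)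
  then have "m \<le> k" unfolding m_def by (simp add: ceiling_le nat_le_iff)
  note bound = fact_power_div_fact_le[OF this]
  obtain S where "S \<subseteq> lollipops n D" "finite S"
    "\<forall>G\<in>S. \<forall>H\<in>S. G \<noteq> H \<longrightarrow> \<not> port_iso n G H" "card S = fact (k - 1) ^ k"
    using noniso_lollipops_card[OF assms(3) \<open>D < n\<close>] unfolding k_def by blast
  with bound show ?thesis
    unfolding Let_def m_def[symmetric] by (intro exI[of _ S]) simp
qed

end
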